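(* Let $(\mathbb{R}^n,S)$ and $(\mathbb{R}^n,T)$ be indecomposable topological Alexander quandles ($S,T$ continuous additive automorphisms). If $F:\mathbb{R}^n\to\mathbb{R}^n$ is a continuous quandle isomorphism with $F(0)=0$, then $S$, $T$, $F$ are linear and $T=FSF^{-1}$.
   Context: The topological Alexander quandle $(\mathbb{R}^n,S)$ has operation $x*y=Sx+(I-S)y$; it is indecomposable (the group generated by right multiplications acts transitively) iff $I-S$ is invertible. *)

theory Defs
  imports "HOL-Analysis.Analysis"
begin

definition alex_op :: "('a::real_vector \<Rightarrow> 'a) \<Rightarrow> 'a \<Rightarrow> 'a \<Rightarrow> 'a" where
  "alex_op S x y = S x + (y - S y)"

definition cont_add_aut :: "('a::real_normed_vector \<Rightarrow> 'a) \<Rightarrow> bool" where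
  "cont_add_aut S \<longleftrightarrow> (\<forall>x y. S (x + y) = S x + S y) \<and> bij S \<and> continuous_on UNIV S"

text \<open>A quandle (X, op) with all right multiplications bijective is indecomposable iff the
  group generated by the right multiplications R_y = (\<lambda>x. op x y) acts transitively, i.e.
  any two elements are connected by a finite chain of steps x \<mapsto> op x y and their inverses.\<close>
definition indecomposable :: "('a \<Rightarrow> 'a \<Rightarrow> 'a) \<Rightarrow> bool" where
  "indecomposable op \<longleftrightarrow>
     (let R = {(x, op x y) | x y. True} in \<forall>a b. (a, b) \<in> (R \<union> R\<inverse>)\<^sup>*)"

definition quandle_iso :: "('a \<Rightarrow> 'a \<Rightarrow> 'a) \<Rightarrow> ('b \<Rightarrow> 'b \<Rightarrow> 'b) \<Rightarrow> ('a \<Rightarrow> 'b) \<Rightarrow> bool" where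
  "quandle_iso op1 op2 F \<longleftrightarrow> bij F \<and> (\<forall>x y. F (op1 x y) = op2 (F x) (F y))"

end

theory Submission
  imports Defs
begin

text \<open>Every quandle step \<open>x \<mapsto> x * y\<close> of the Alexander quandle changes \<open>x\<close> by
  \<open>(I - S)(x - y)\<close>, so indecomposability forces \<open>I - S\<close> to be onto. Then every vector is
  \<open>S x + (I - S) y = x * y\<close>, and a quandle isomorphism fixing \<open>0\<close> intertwines \<open>S\<close> with \<open>T\<close>
  (from \<open>x * 0\<close>) and \<open>I - S\<close> with \<open>I - T\<close> (from \<open>0 * y\<close>); hence it is additive.
  Continuous additive maps of real vector spaces are linear, since they are
  \<open>\<rat>\<close>-linear and \<open>\<rat>\<close> is dense in \<open>\<real>\<close>.\<close>

(* Qualified names: plain \<open>additive\<close> is the measure-theoretic notion of HOL-Analysis. *)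

lemma additive_scaleR_of_nat:
  fixes f :: "'a::real_vector \<Rightarrow> 'b::real_vector"
  assumes "Modules.additive f"
  shows "f (of_nat n *\<^sub>R x) = of_nat n *\<^sub>R f x"
  by (induction n) (simp_all add: additive.zero[OF assms] additive.add[OF assms] scaleR_left_distrib)

lemma additive_scaleR_of_int:
  fixes f :: "'a::real_vector \<Rightarrow> 'b::real_vector"
  assumes "Modules.additive f"
  shows "f (of_int k *\<^sub>R x) = of_int k *\<^sub>R f x"
proof (cases k rule: int_cases)
  case (nonneg n)
  then show ?thesis
    using additive_scaleR_of_nat[OF assms, of n x] by simp
next
  case (neg n)
  then show ?thesis
    using additive_scaleR_of_nat[OF assms, of "Suc n" x]
      additive.minus[OF assms, of "of_nat (Suc n) *\<^sub>R x"]
    by (simp del: of_nat_Suc)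
qed

lemma additive_scaleR_Rats:
  fixes f :: "'a::real_vector \<Rightarrow> 'b::real_vector"
  assumes "Modules.additive f" and "r \<in> \<rat>"
  shows "f (r *\<^sub>R x) = r *\<^sub>R f x"
proof -
  obtain a b where b: "b > 0" and r: "r = of_int a / of_int b"
    using Rats_cases'[OF assms(2)] by blast
  have "of_int b *\<^sub>R f (r *\<^sub>R x) = f (of_int b *\<^sub>R (r *\<^sub>R x))"
    by (simp only: additive_scaleR_of_int[OF assms(1)])
  also have "of_int b *\<^sub>R (r *\<^sub>R x) = of_int a *\<^sub>R x"
    using b r by simp
  also have "f \<dots> = of_int b *\<^sub>R (r *\<^sub>R f x)"
    using b r by (simp add: additive_scaleR_of_int[OF assms(1)])
  finally show ?thesis
    using b by (simp only: scaleR_cancel_left) simp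
qed

lemma additive_continuous_imp_linear:
  fixes f :: "'a::real_normed_vector \<Rightarrow> 'b::real_normed_vector"
  assumes "Modules.additive f" and cont: "continuous_on UNIV f"
  shows "linear f"
proof (rule linearI)
  show "f (x + y) = f x + f y" for x y
    using assms(1) by (rule additive.add)
  show "f (c *\<^sub>R x) = c *\<^sub>R f x" for c x
  proof -
    have "closed {c. f (c *\<^sub>R x) = c *\<^sub>R f x}"
      by (rule closed_Collect_eq) (auto intro!: continuous_intros continuous_on_compose2[OF cont])
    moreover have "\<rat> \<subseteq> {c. f (c *\<^sub>R x) = c *\<^sub>R f x}"
      using additive_scaleR_Rats[OF assms(1)] by blast
    ultimately have "closure \<rat> \<subseteq> {c. f (c *\<^sub>R x) = c *\<^sub>R f x}"
      by (rule closure_minimal[rotated])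
    then show ?thesis
      by (auto simp: Rats_closure_real)
  qed
qed

lemma additive_id_minus:
  assumes "Modules.additive S"
  shows "Modules.additive (\<lambda>z. z - S z)"
  by (rule additive.intro) (simp add: additive.add[OF assms])

lemma alex_op_diff_in_range:
  assumes "Modules.additive S"
  shows "x - alex_op S x y \<in> range (\<lambda>z. z - S z)"
proof -
  have "x - alex_op S x y = (x - y) - S (x - y)"
    by (simp add: alex_op_def additive.diff[OF assms])
  then show ?thesis
    by (metis rangeI)
qed

lemma indecomposable_alex_op_imp_surj:
  fixes S :: "'a::real_vector \<Rightarrow> 'a"
  assumes S: "Modules.additive S" and "indecomposable (alex_op S)"
  shows "surj (\<lambda>z. z - S z)"
proof -
  define R where "R = {(x, alex_op S x y) | x y. True}"
  let ?M = "range (\<lambda>z. z - S z)"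
  have add_M: "u + v \<in> ?M" if "u \<in> ?M" "v \<in> ?M" for u v
    using that additive.add[OF additive_id_minus[OF S], symmetric] by blast
  have minus_M: "- u \<in> ?M" if "u \<in> ?M" for u
    using that additive.minus[OF additive_id_minus[OF S], symmetric] by blast
  have step_M: "a - b \<in> ?M" if "(a, b) \<in> R \<union> R\<inverse>" for a b
    using that minus_M[OF alex_op_diff_in_range[OF S]] alex_op_diff_in_range[OF S]
    unfolding R_def by auto
  have chain_M: "a - b \<in> ?M" if "(a, b) \<in> (R \<union> R\<inverse>)\<^sup>*" for a b
    using that
  proof (induction rule: rtrancl_induct)
    case base
    show ?case
      using rangeI[of "\<lambda>z. z - S z" 0] by (simp add: additive.zero[OF S])
  next
    case (step b c)
    then have "(a - b) + (b - c) \<in> ?M"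
      using add_M step_M by blast
    then show ?case
      by simp
  qed
  have "v - 0 \<in> ?M" for v
    using assms(2) by (intro chain_M) (simp add: indecomposable_def R_def Let_def)
  then show ?thesis
    by auto
qed

lemma alex_op_hom_intertwines:
  assumes S: "Modules.additive S" and T: "Modules.additive T" and F0: "F 0 = 0"
    and hom: "\<And>x y. F (alex_op S x y) = alex_op T (F x) (F y)"
  shows "F (S x) = T (F x)" and "F (y - S y) = F y - T (F y)"
  using hom[of x 0] hom[of 0 y] F0 additive.zero[OF S] additive.zero[OF T]
  by (simp_all add: alex_op_def)

lemma alex_op_hom_additive:
  assumes S: "Modules.additive S" and T: "Modules.additive T" and F0: "F 0 = 0"
    and hom: "\<And>x y. F (alex_op S x y) = alex_op T (F x) (F y)"
    and "surj S" and "surj (\<lambda>z. z - S z)"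
  shows "Modules.additive F"
proof
  fix u v
  obtain x y where u: "u = S x" and v: "v = y - S y"
    using assms(5,6) by (metis surjD)
  have "F (u + v) = F (alex_op S x y)"
    by (simp add: alex_op_def u v)
  also have "\<dots> = T (F x) + (F y - T (F y))"
    by (simp only: hom) (simp add: alex_op_def)
  also have "\<dots> = F u + F v"
    by (simp add: u v alex_op_hom_intertwines[OF S T F0 hom])
  finally show "F (u + v) = F u + F v" .
qed

theorem mainTheorem15:
  fixes S T F :: "real ^ 'n \<Rightarrow> real ^ 'n"
  assumes "cont_add_aut S" and "cont_add_aut T"
    and "indecomposable (alex_op S)" and "indecomposable (alex_op T)"
    and "continuous_on UNIV F" and "quandle_iso (alex_op S) (alex_op T) F"
    and "F 0 = 0"
  shows "linear S \<and> linear T \<and> linear F \<and> T = F \<circ> S \<circ> inv F"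
proof -
  have S: "Modules.additive S" "bij S" "continuous_on UNIV S"
    and T: "Modules.additive T" "continuous_on UNIV T"
    using assms(1,2) by (auto simp: cont_add_aut_def Modules.additive_def)
  have "bij F" and hom: "\<And>x y. F (alex_op S x y) = alex_op T (F x) (F y)"
    using assms(6) by (auto simp: quandle_iso_def)
  have "Modules.additive F"
    using S(1) T(1) assms(7) hom bij_is_surj[OF S(2)]
      indecomposable_alex_op_imp_surj[OF S(1) assms(3)]
    by (rule alex_op_hom_additive)
  moreover have "T = F \<circ> S \<circ> inv F"
    using alex_op_hom_intertwines(1)[OF S(1) T(1) assms(7) hom] \<open>bij F\<close>
    by (auto simp: bij_is_surj surj_f_inv_f)
  ultimately show ?thesis
    using additive_continuous_imp_linear S T assms(5) by blast
qed

end
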